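(* Let $G = (V, E, b, c)$ be a weighted hypergraph whose edges $e_0, e_1, \dots$ are processed by procedure COVER, and let $r$ be any integer. Then for every time $t$, \[ b\left( \{ v \in e_t \mid \mathrm{eff}_{t+1}(v) \leq r \} \right) < 2^{r+1} \cdot c(e_t). \]
   Context: A weighted hypergraph $G = (V, E, b, c)$ has vertex set $V$, a multiset $E$ of non-empty edges $e \subseteq V$, benefits $b : V \to \mathbb{Q}_{>0}$ and costs $c : E \to \mathbb{Q}_{>0}$; $b(U) = \sum_{v \in U} b(v)$. Edges arrive in a stream $e_0, e_1, \dots$, and $\mathrm{id}(e)$ is an identifier of edge $e$. Procedure COVER maintains for each $v \in V$ a variable $\mathrm{eid}(v)$ (initially NULL) and an integer variable $\mathrm{eff}(v)$ (initially $-\infty$); $\mathrm{eff}_t(v)$ denotes the value of $\mathrm{eff}(v)$ just before $e_t$ is processed. For $T \subseteq e_t$ the level is $\mathrm{lev}_t(T) = \lceil \lg (b(T)/c(e_t)) \rceil$ ($\lg$ = base-2 logarithm), and $T$ is effective at time $t$ if $\mathrm{lev}_t(T) > \mathrm{eff}_t(v)$ for every $v \in T$ (the empty set is vacuously effective). When $e_t$ arrives, COVER computes an effective subset $T \subseteq e_t$ of largest benefit $b(T)$ (any such subset) and, for every $v \in T$, sets $\mathrm{eid}(v) \leftarrow \mathrm{id}(e_t)$ and $\mathrm{eff}(v) \leftarrow \mathrm{lev}_t(T)$. *)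

theory Defs
  imports Complex_Main "HOL-Library.Extended_Real"
begin

text \<open>Edges of the stream are indexed by time: the edge arriving at time t is
  E t (a vertex set) with cost c t. Benefits b and costs are positive rationals.
  eff t v is the value of eff(v) just before e_t is processed (ereal, initially -\<infinity>).\<close>

definition bsum :: "('v \<Rightarrow> rat) \<Rightarrow> 'v set \<Rightarrow> real" where
  "bsum b U = (\<Sum>v\<in>U. real_of_rat (b v))"

definition lev :: "('v \<Rightarrow> rat) \<Rightarrow> (nat \<Rightarrow> rat) \<Rightarrow> nat \<Rightarrow> 'v set \<Rightarrow> int" where
  "lev b c t T = \<lceil>log 2 (bsum b T / real_of_rat (c t))\<rceil>"

definition effective ::
  "('v \<Rightarrow> rat) \<Rightarrow> (nat \<Rightarrow> rat) \<Rightarrow> (nat \<Rightarrow> 'v \<Rightarrow> ereal) \<Rightarrow> nat \<Rightarrow> 'v set \<Rightarrow> bool" where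
  "effective b c eff t T \<longleftrightarrow> (\<forall>v\<in>T. ereal (real_of_int (lev b c t T)) > eff t v)"

text \<open>eff is a possible evolution of the eff-variables under COVER (for some
  admissible choice of maximum-benefit effective subsets).\<close>
definition cover_run ::
  "('v \<Rightarrow> rat) \<Rightarrow> (nat \<Rightarrow> 'v set) \<Rightarrow> (nat \<Rightarrow> rat) \<Rightarrow> (nat \<Rightarrow> 'v \<Rightarrow> ereal) \<Rightarrow> bool" where
  "cover_run b E c eff \<longleftrightarrow>
     eff 0 = (\<lambda>_. -\<infinity>) \<and>
     (\<forall>t. \<exists>T. T \<subseteq> E t \<and> effective b c eff t T \<and>
        (\<forall>T'. T' \<subseteq> E t \<and> effective b c eff t T' \<longrightarrow> bsum b T' \<le> bsum b T) \<and>
        eff (Suc t) = (\<lambda>v. if v \<in> T then ereal (real_of_int (lev b c t T)) else eff t v))"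

end

theory Submission
  imports Defs
begin

text \<open>Let \<open>U\<close> be the vertices of \<open>e\<^sub>t\<close> whose effectiveness after step \<open>t\<close> is at most \<open>r\<close>,
  and suppose \<open>b(U) \<ge> 2\<^sup>r\<^sup>+\<^sup>1 c(e\<^sub>t)\<close>. Vertices of \<open>U\<close> outside the chosen set \<open>T\<close> kept their
  old effectiveness \<open>\<le> r\<close>, while \<open>lev(U \<union> T) \<ge> r + 1\<close> and \<open>lev(U \<union> T) \<ge> lev(T)\<close>;
  hence \<open>U \<union> T\<close> is effective. Maximality of \<open>T\<close> forces \<open>U \<subseteq> T\<close>, so every vertex of the
  nonempty set \<open>U\<close> received effectiveness \<open>lev(T) = lev(U \<union> T) \<ge> r + 1\<close>, a contradiction.\<close>

lemma bsum_mono: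
  assumes "finite S" "A \<subseteq> S" "\<And>v. v \<in> S \<Longrightarrow> b v \<ge> 0"
  shows "bsum b A \<le> bsum b S"
  unfolding bsum_def using assms by (intro sum_mono2) auto

lemma bsum_pos:
  assumes "finite S" "S \<noteq> {}" "\<And>v. v \<in> S \<Longrightarrow> b v > 0"
  shows "bsum b S > 0"
  unfolding bsum_def using assms by (intro sum_pos) auto

lemma subset_if_bsum_Un_le:
  assumes "finite (U \<union> T)" "\<And>v. v \<in> U \<union> T \<Longrightarrow> b v > 0"
    and "bsum b (U \<union> T) \<le> bsum b T"
  shows "U \<subseteq> T"
proof (rule ccontr)
  assume "\<not> U \<subseteq> T"
  then obtain w where "w \<in> U \<union> T - T" by auto
  then have "bsum b T < bsum b (U \<union> T)"
    unfolding bsum_def using assms(1,2)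
    by (intro sum_strict_mono2) (auto simp: less_imp_le)
  with assms(3) show False by simp
qed

lemma lev_mono:
  assumes "0 < bsum b A" "bsum b A \<le> bsum b S" "c t > 0"
  shows "lev b c t A \<le> lev b c t S"
  unfolding lev_def using assms by (intro ceiling_mono) (simp add: divide_right_mono)

lemma lev_ge:
  assumes "2 powr real_of_int k * real_of_rat (c t) \<le> bsum b S" "c t > 0"
  shows "k \<le> lev b c t S"
proof -
  have "2 powr real_of_int k \<le> bsum b S / real_of_rat (c t)"
    using assms by (simp add: pos_le_divide_eq)
  then have "real_of_int k \<le> log 2 (bsum b S / real_of_rat (c t))"
    using le_log_iff[of 2 "bsum b S / real_of_rat (c t)"] by (smt (verit) powr_gt_zero)
  then show ?thesis
    unfolding lev_def by (meson le_of_int_ceiling order_trans of_int_le_iff)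
qed

lemma cover_run_step:
  assumes "cover_run b E c eff"
  obtains T where "T \<subseteq> E t" "effective b c eff t T"
    "\<And>T'. T' \<subseteq> E t \<Longrightarrow> effective b c eff t T' \<Longrightarrow> bsum b T' \<le> bsum b T"
    "eff (Suc t) = (\<lambda>v. if v \<in> T then ereal (real_of_int (lev b c t T)) else eff t v)"
proof -
  have "\<exists>T. T \<subseteq> E t \<and> effective b c eff t T \<and>
      (\<forall>T'. T' \<subseteq> E t \<and> effective b c eff t T' \<longrightarrow> bsum b T' \<le> bsum b T) \<and>
      eff (Suc t) = (\<lambda>v. if v \<in> T then ereal (real_of_int (lev b c t T)) else eff t v)"
    using assms unfolding cover_run_def by simp
  then show thesis
    using that by (elim exE conjE) auto
qed

lemma lev_Un_ge:
  assumes "finite (U \<union> T)" "\<And>v. v \<in> U \<union> T \<Longrightarrow> b v \<ge> 0" "c t > 0"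
    and "2 powr real_of_int k * real_of_rat (c t) \<le> bsum b U"
  shows "k \<le> lev b c t (U \<union> T)"
proof (rule lev_ge)
  have "bsum b U \<le> bsum b (U \<union> T)"
    using assms(1,2) by (intro bsum_mono) auto
  with assms(4) show "2 powr real_of_int k * real_of_rat (c t) \<le> bsum b (U \<union> T)"
    by linarith
qed (rule assms(3))

lemma effective_Un_heavy:
  assumes fin: "finite (U \<union> T)" and pos: "\<And>v. v \<in> U \<union> T \<Longrightarrow> b v > 0" and "c t > 0"
    and T: "effective b c eff t T"
    and low: "\<And>v. v \<in> U - T \<Longrightarrow> eff t v \<le> ereal (real_of_int r)"
    and heavy: "2 powr real_of_int (r + 1) * real_of_rat (c t) \<le> bsum b U"
  shows "effective b c eff t (U \<union> T)"
  unfolding effective_def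
proof
  fix v assume v: "v \<in> U \<union> T"
  have nonneg: "\<And>w. w \<in> U \<union> T \<Longrightarrow> b w \<ge> 0" using pos by (simp add: less_imp_le)
  show "eff t v < ereal (real_of_int (lev b c t (U \<union> T)))"
  proof (cases "v \<in> T")
    case True
    have "0 < bsum b T"
      using True fin pos by (intro bsum_pos) auto
    then have "lev b c t T \<le> lev b c t (U \<union> T)"
      using bsum_mono[OF fin _ nonneg] \<open>c t > 0\<close> by (intro lev_mono) auto
    moreover have "eff t v < ereal (real_of_int (lev b c t T))"
      using T True unfolding effective_def by auto
    ultimately show ?thesis
      by (meson less_le_trans ereal_less_eq(3) of_int_le_iff)
  next
    case False
    have "r + 1 \<le> lev b c t (U \<union> T)"
      using fin nonneg \<open>c t > 0\<close> heavy by (rule lev_Un_ge)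
    moreover have "eff t v \<le> ereal (real_of_int r)"
      using low v False by blast
    ultimately show ?thesis
      by (simp add: le_less_trans)
  qed
qed

theorem lemma7:
  fixes V :: "'v set" and E :: "nat \<Rightarrow> 'v set" and b :: "'v \<Rightarrow> rat"
    and c :: "nat \<Rightarrow> rat" and eff :: "nat \<Rightarrow> 'v \<Rightarrow> ereal" and r :: int and t :: nat
  assumes "finite V"
    and "\<And>s. E s \<subseteq> V" and "\<And>s. E s \<noteq> {}"
    and "\<And>v. v \<in> V \<Longrightarrow> b v > 0"
    and "\<And>s. c s > 0"
    and "cover_run b E c eff"
  shows "bsum b {v \<in> E t. eff (Suc t) v \<le> ereal (real_of_int r)}
           < 2 powr (real_of_int (r + 1)) * real_of_rat (c t)"
proof (rule ccontr)
  define U where "U = {v \<in> E t. eff (Suc t) v \<le> ereal (real_of_int r)}"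
  assume "\<not> ?thesis"
  then have heavy: "2 powr real_of_int (r + 1) * real_of_rat (c t) \<le> bsum b U"
    unfolding U_def by simp
  obtain T where T: "T \<subseteq> E t" "effective b c eff t T"
    and max: "\<And>T'. T' \<subseteq> E t \<Longrightarrow> effective b c eff t T' \<Longrightarrow> bsum b T' \<le> bsum b T"
    and step: "eff (Suc t) = (\<lambda>v. if v \<in> T then ereal (real_of_int (lev b c t T)) else eff t v)"
    using cover_run_step[OF assms(6), where t = t] by blast
  have "U \<subseteq> E t" unfolding U_def by auto
  with T(1) assms(2) have "U \<union> T \<subseteq> V" by blast
  then have fin_UT: "finite (U \<union> T)" and pos_UT: "\<And>v. v \<in> U \<union> T \<Longrightarrow> b v > 0"
    using assms(1,4) by (auto intro: finite_subset)
  have "effective b c eff t (U \<union> T)"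
  proof (rule effective_Un_heavy[OF fin_UT pos_UT assms(5) T(2) _ heavy])
    show "eff t v \<le> ereal (real_of_int r)" if "v \<in> U - T" for v
      using that unfolding U_def step by auto
  qed
  then have "bsum b (U \<union> T) \<le> bsum b T"
    using max \<open>U \<subseteq> E t\<close> T(1) by simp
  with fin_UT pos_UT have "U \<subseteq> T"
    by (rule subset_if_bsum_Un_le)
  moreover have "r + 1 \<le> lev b c t (U \<union> T)"
    using fin_UT pos_UT assms(5) heavy by (intro lev_Un_ge) (auto simp: less_imp_le)
  moreover have "U \<noteq> {}"
    using heavy assms(5)[of t] by (auto simp: bsum_def mult_le_0_iff)
  ultimately show False
    unfolding U_def by (auto simp: step sup_absorb2)
qed

end
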